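(* Let $a,b,c>0$ be constants and let $F:\mathbb R\to(0,\infty)$ be measurable with $0<I(F,1)<\infty$. Then for every $h\in\Phi\cup\Psi$, $$as^{orlicz}_{h,aF,bF}\Big(\frac{c^2\|\cdot\|^2}{2}\Big)=a\cdot I(F,c)\cdot h\Big(\frac{(\sqrt{2\pi})^n}{c^{2n}\cdot b\cdot I(F,c)}\Big).$$ If moreover the function $x\mapsto F(\|x\|^2/2)$ is log-concave, the same formula holds for $G^{orlicz}_{h,aF,bF}\big(\frac{c^2\|\cdot\|^2}{2}\big)$.
   Context: For a measurable $F:\mathbb R\to(0,\infty)$ and $c>0$, $I(F,c)=\int_{\mathbb R^n}F(c^2\|x\|^2/2)\,dx$. $\mathcal C$ is the set of convex functions $\psi:\mathbb R^n\to\mathbb R\cup\{+\infty\}$ with domain of nonempty interior; $\psi^*(y)=\sup_x(\langle x,y\rangle-\psi(x))$; $\nabla^2\psi$ is the Alexandrov Hessian; $X_\psi=\{x:\psi(x)<\infty,\ \nabla^2\psi(x)\text{ exists and is invertible}\}$. $I(g,\psi^* )=\int_{X_{\psi^*}}g$; $\mathcal F^+_{\psi^*}$ is the set of integrable $g>0$ on $X_{\psi^*}$ with $0<I(g,\psi^* )<\infty$, and $\mathcal L_{\psi^*}$ its log-concave members. For continuous $h:(0,\infty)\to(0,\infty)$ and measurable $F_1,F_2:\mathbb R\to(0,\infty)$, $V_{h,F_1,F_2}(\psi,g)=\int_{X_\psi}h\big(\frac{g(\nabla\psi(x))}{F_2(\langle x,\nabla\psi(x)\rangle-\psi(x))}\big)F_1(\psi(x))dx$.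 $\Phi$: $h$ constant or strictly convex; $\Psi$: $h$ constant or increasing strictly concave. For $h\in\Phi$, $as^{orlicz}_{h,F_1,F_2}(\psi)=\inf_{g\in\mathcal F^+_{\psi^*}}V_{h,F_1,F_2}(\psi,(\sqrt{2\pi})^ng/I(g,\psi^* ))$ and $G^{orlicz}_{h,F_1,F_2}(\psi)$ is the same infimum over $g\in\mathcal L_{\psi^*}$; for $h\in\Psi$ replace $\inf$ by $\sup$. Here $\frac{c^2\|\cdot\|^2}{2}$ denotes the function $x\mapsto c^2\|x\|^2/2$, and $aF$, $bF$ denote $t\mapsto aF(t)$, $t\mapsto bF(t)$. *)

theory Defs
  imports "HOL-Analysis.Analysis"
begin

text \<open>Ambient space: R^n modelled by an arbitrary euclidean_space 'a, n = DIM('a).\<close>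

definition I_F :: "(real \<Rightarrow> real) \<Rightarrow> real \<Rightarrow> ('a::euclidean_space) itself \<Rightarrow> ennreal" where
  "I_F F c _ = (\<integral>\<^sup>+ x. ennreal (F (c\<^sup>2 * (norm (x::'a))\<^sup>2 / 2)) \<partial>lebesgue)"

definition legendre :: "('a::euclidean_space \<Rightarrow> ereal) \<Rightarrow> 'a \<Rightarrow> ereal" where
  "legendre \<psi> y = (SUP x. ereal (inner x y) - \<psi> x)"

definition has_alex_hessian :: "('a::euclidean_space \<Rightarrow> ereal) \<Rightarrow> 'a \<Rightarrow> 'a \<Rightarrow> ('a \<Rightarrow> 'a) \<Rightarrow> bool" where
  "has_alex_hessian \<psi> x g A \<longleftrightarrow>
     x \<in> interior {y. \<psi> y < \<infinity>} \<and> (\<forall>y. \<psi> y \<noteq> -\<infinity>) \<and>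
     linear A \<and> (\<forall>u v. inner (A u) v = inner u (A v)) \<and>
     ((\<lambda>y. (real_of_ereal (\<psi> y) - real_of_ereal (\<psi> x) - inner g (y - x)
              - inner (A (y - x)) (y - x) / 2) / (norm (y - x))\<^sup>2) \<longlongrightarrow> 0) (at x)"

definition Xset :: "('a::euclidean_space \<Rightarrow> ereal) \<Rightarrow> 'a set" where
  "Xset \<psi> = {x. \<psi> x < \<infinity> \<and> (\<exists>g A. has_alex_hessian \<psi> x g A \<and> bij A)}"

text \<open>gradient (meaningful on Xset)\<close>
definition alex_grad :: "('a::euclidean_space \<Rightarrow> ereal) \<Rightarrow> 'a \<Rightarrow> 'a" where
  "alex_grad \<psi> x = (SOME g. \<exists>A. has_alex_hessian \<psi> x g A)"

definition I_g :: "('a::euclidean_space \<Rightarrow> real) \<Rightarrow> ('a \<Rightarrow> ereal) \<Rightarrow> real" where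
  "I_g g \<psi>s = (LINT x : Xset \<psi>s | lebesgue. g x)"

definition Fplus :: "('a::euclidean_space \<Rightarrow> ereal) \<Rightarrow> ('a \<Rightarrow> real) set" where
  "Fplus \<psi>s = {g. (\<forall>x\<in>Xset \<psi>s. 0 < g x) \<and> set_integrable lebesgue (Xset \<psi>s) g \<and> 0 < I_g g \<psi>s}"

definition log_concave_on :: "'a::real_vector set \<Rightarrow> ('a \<Rightarrow> real) \<Rightarrow> bool" where
  "log_concave_on X g \<longleftrightarrow> (\<forall>x\<in>X. \<forall>y\<in>X. \<forall>t::real. 0 \<le> t \<and> t \<le> 1 \<and> t *\<^sub>R x + (1 - t) *\<^sub>R y \<in> X \<longrightarrow>
      g x powr t * g y powr (1 - t) \<le> g (t *\<^sub>R x + (1 - t) *\<^sub>R y))"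

definition Lset :: "('a::euclidean_space \<Rightarrow> ereal) \<Rightarrow> ('a \<Rightarrow> real) set" where
  "Lset \<psi>s = {g \<in> Fplus \<psi>s. log_concave_on (Xset \<psi>s) g}"

definition V_orlicz :: "(real \<Rightarrow> real) \<Rightarrow> (real \<Rightarrow> real) \<Rightarrow> (real \<Rightarrow> real) \<Rightarrow>
     ('a::euclidean_space \<Rightarrow> ereal) \<Rightarrow> ('a \<Rightarrow> real) \<Rightarrow> ennreal" where
  "V_orlicz h F1 F2 \<psi> g = (\<integral>\<^sup>+ x. indicator (Xset \<psi>) x *
      ennreal (h (g (alex_grad \<psi> x) /
                  F2 (inner x (alex_grad \<psi> x) - real_of_ereal (\<psi> x)))
               * F1 (real_of_ereal (\<psi> x))) \<partial>lebesgue)"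

definition strictly_convex_on :: "real set \<Rightarrow> (real \<Rightarrow> real) \<Rightarrow> bool" where
  "strictly_convex_on S f \<longleftrightarrow> (\<forall>x\<in>S. \<forall>y\<in>S. \<forall>t. x \<noteq> y \<and> 0 < t \<and> t < 1 \<longrightarrow>
      f ((1 - t) * x + t * y) < (1 - t) * f x + t * f y)"

definition strictly_concave_on :: "real set \<Rightarrow> (real \<Rightarrow> real) \<Rightarrow> bool" where
  "strictly_concave_on S f \<longleftrightarrow> strictly_convex_on S (\<lambda>x. - f x)"

definition admissible_h :: "(real \<Rightarrow> real) \<Rightarrow> bool" where
  "admissible_h h \<longleftrightarrow> continuous_on {0<..} h \<and> (\<forall>t>0. 0 < h t)"

definition const_on_pos :: "(real \<Rightarrow> real) \<Rightarrow> bool" where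
  "const_on_pos h \<longleftrightarrow> (\<exists>k. \<forall>t>0. h t = k)"

definition PhiSet :: "(real \<Rightarrow> real) set" where
  "PhiSet = {h. admissible_h h \<and> (const_on_pos h \<or> strictly_convex_on {0<..} h)}"

definition PsiSet :: "(real \<Rightarrow> real) set" where
  "PsiSet = {h. admissible_h h \<and> (const_on_pos h \<or>
      (mono_on {0<..} h \<and> strictly_concave_on {0<..} h))}"

definition normalize_g :: "('a::euclidean_space \<Rightarrow> ereal) \<Rightarrow> ('a \<Rightarrow> real) \<Rightarrow> 'a \<Rightarrow> real" where
  "normalize_g \<psi>s g = (\<lambda>y. sqrt (2 * pi) ^ DIM('a) * g y / I_g g \<psi>s)"

text \<open>as^orlicz and G^orlicz: infimum version (h in Phi) and supremum version (h in Psi)\<close>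
definition as_orlicz_inf :: "(real \<Rightarrow> real) \<Rightarrow> (real \<Rightarrow> real) \<Rightarrow> (real \<Rightarrow> real) \<Rightarrow> ('a::euclidean_space \<Rightarrow> ereal) \<Rightarrow> ennreal" where
  "as_orlicz_inf h F1 F2 \<psi> = (INF g\<in>Fplus (legendre \<psi>). V_orlicz h F1 F2 \<psi> (normalize_g (legendre \<psi>) g))"
definition as_orlicz_sup :: "(real \<Rightarrow> real) \<Rightarrow> (real \<Rightarrow> real) \<Rightarrow> (real \<Rightarrow> real) \<Rightarrow> ('a::euclidean_space \<Rightarrow> ereal) \<Rightarrow> ennreal" where
  "as_orlicz_sup h F1 F2 \<psi> = (SUP g\<in>Fplus (legendre \<psi>). V_orlicz h F1 F2 \<psi> (normalize_g (legendre \<psi>) g))"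
definition G_orlicz_inf :: "(real \<Rightarrow> real) \<Rightarrow> (real \<Rightarrow> real) \<Rightarrow> (real \<Rightarrow> real) \<Rightarrow> ('a::euclidean_space \<Rightarrow> ereal) \<Rightarrow> ennreal" where
  "G_orlicz_inf h F1 F2 \<psi> = (INF g\<in>Lset (legendre \<psi>). V_orlicz h F1 F2 \<psi> (normalize_g (legendre \<psi>) g))"
definition G_orlicz_sup :: "(real \<Rightarrow> real) \<Rightarrow> (real \<Rightarrow> real) \<Rightarrow> (real \<Rightarrow> real) \<Rightarrow> ('a::euclidean_space \<Rightarrow> ereal) \<Rightarrow> ennreal" where
  "G_orlicz_sup h F1 F2 \<psi> = (SUP g\<in>Lset (legendre \<psi>). V_orlicz h F1 F2 \<psi> (normalize_g (legendre \<psi>) g))"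

end

theory Submission
  imports Defs "HOL-Probability.Probability_Measure"
begin

text \<open>For \<psi>(x) = c^2 |x|^2 / 2 every point lies in X_\<psi>, the gradient is c^2 x,
  <x, \<nabla>\<psi>(x)> - \<psi>(x) = \<psi>(x), and \<psi>^*(y) = |y|^2 / (2 c^2). Hence V(\<psi>, g) is the integral of
  h \<circ> X against the weight a F(\<psi>), of total mass a I(F,c), and after the substitution y = c^2 x
  the weighted mean of X no longer depends on g: it is the argument of h in the claimed formula.
  Jensen's inequality bounds V from below for convex h and from above for concave h, and
  g(y) = F(|y|^2 / (2 c^2)) makes X constant, so the bound is attained; this g is log-concave
  whenever x \<mapsto> F(|x|^2 / 2) is.\<close>

section \<open>Dilations of Lebesgue measure\<close>

lemma nn_integral_lebesgue_scaleR:
  fixes f :: "'a::euclidean_space \<Rightarrow> ennreal"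
  assumes f: "f \<in> borel_measurable lebesgue" and r: "r \<noteq> 0"
  shows "(\<integral>\<^sup>+x. f x \<partial>lebesgue) = ennreal (\<bar>r\<bar> ^ DIM('a)) * (\<integral>\<^sup>+x. f (r *\<^sub>R x) \<partial>lebesgue)"
proof -
  have "(lebesgue::'a measure)
      = density (distr lebesgue lebesgue (\<lambda>x. r *\<^sub>R x)) (\<lambda>_. ennreal (\<bar>r\<bar> ^ DIM('a)))"
    using lebesgue_affine_euclidean[where c="\<lambda>_::'a. r" and t=0] r
    unfolding scaleR_scaleR[symmetric] scaleR_sum_right[symmetric] euclidean_representation prod_constant
    by simp
  then have "(\<integral>\<^sup>+x. f x \<partial>lebesgue)
      = (\<integral>\<^sup>+x. f x \<partial>density (distr lebesgue lebesgue (\<lambda>x. r *\<^sub>R x)) (\<lambda>_. ennreal (\<bar>r\<bar> ^ DIM('a))))"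
    by (rule arg_cong)
  also have "\<dots> = ennreal (\<bar>r\<bar> ^ DIM('a)) * (\<integral>\<^sup>+x. f (r *\<^sub>R x) \<partial>lebesgue)"
    using f by (simp add: nn_integral_density nn_integral_cmult nn_integral_distr)
  finally show ?thesis .
qed

lemma has_bochner_integral_lebesgue_scaleR:
  fixes g :: "'a::euclidean_space \<Rightarrow> real"
  assumes g: "integrable lebesgue g" and g_nonneg: "\<And>x. 0 \<le> g x" and r: "r \<noteq> 0"
  shows "has_bochner_integral lebesgue (\<lambda>x. g (r *\<^sub>R x))
           ((\<integral>x. g x \<partial>lebesgue) / \<bar>r\<bar> ^ DIM('a))"
proof (rule has_bochner_integral_nn_integral)
  have [measurable]: "g \<in> borel_measurable lebesgue" using g by simp
  show "(\<lambda>x. g (r *\<^sub>R x)) \<in> borel_measurable lebesgue" by measurable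
  have int_nonneg: "0 \<le> (\<integral>x. g x \<partial>lebesgue)"
    using g_nonneg by (simp add: integral_nonneg_AE)
  then show "0 \<le> (\<integral>x. g x \<partial>lebesgue) / \<bar>r\<bar> ^ DIM('a)" by simp
  have "ennreal (\<bar>r\<bar> ^ DIM('a)) * ennreal ((\<integral>x. g x \<partial>lebesgue) / \<bar>r\<bar> ^ DIM('a))
      = ennreal (\<integral>x. g x \<partial>lebesgue)"
    using r int_nonneg by (simp add: ennreal_mult'[symmetric])
  also have "\<dots> = (\<integral>\<^sup>+x. ennreal (g x) \<partial>lebesgue)"
    using g g_nonneg by (simp add: nn_integral_eq_integral)
  also have "\<dots> = ennreal (\<bar>r\<bar> ^ DIM('a)) * (\<integral>\<^sup>+x. ennreal (g (r *\<^sub>R x)) \<partial>lebesgue)"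
    using r by (intro nn_integral_lebesgue_scaleR) simp_all
  finally show "(\<integral>\<^sup>+x. ennreal (g (r *\<^sub>R x)) \<partial>lebesgue)
      = ennreal ((\<integral>x. g x \<partial>lebesgue) / \<bar>r\<bar> ^ DIM('a))"
    using r by (simp add: ennreal_mult_cancel_left)
qed (simp add: g_nonneg)

section \<open>Jensen's inequality for a weighted measure\<close>

lemma borel_measurable_continuous_on_comp:
  fixes f :: "'a::topological_space \<Rightarrow> 'b::topological_space"
  assumes "A \<in> sets borel" "continuous_on A f"
    and "X \<in> borel_measurable M" "\<And>x. x \<in> space M \<Longrightarrow> X x \<in> A"
  shows "(\<lambda>x. f (X x)) \<in> borel_measurable M"
proof -
  have "X \<in> M \<rightarrow>\<^sub>M restrict_space borel A"
    using assms(3,4) by (intro measurable_restrict_space2) auto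
  from measurable_comp[OF this borel_measurable_continuous_on_restrict[OF assms(2)]]
  show ?thesis by (simp add: comp_def)
qed

lemma concave_on_pos_linear_growth:
  fixes h :: "real \<Rightarrow> real"
  assumes h: "concave_on {0<..} h" and h_pos: "\<And>t. 0 < t \<Longrightarrow> 0 < h t" and t: "0 < t"
  shows "h t \<le> 2 * h 1 * (1 + t)"
proof -
  have chord: "h t \<le> h 1 / \<theta>" if "0 < \<theta>" "\<theta> \<le> 1" "0 < x" "(1 - \<theta>) * x + \<theta> * t = 1" for \<theta> x
  proof -
    have "(1 - \<theta>) * h x + \<theta> * h t \<le> h 1"
      using concave_onD[OF h, of \<theta> x t] that t by simp
    moreover have "0 \<le> (1 - \<theta>) * h x" using that h_pos[of x] by simp
    ultimately show ?thesis using \<open>0 < \<theta>\<close> by (simp add: field_simps)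
  qed
  have "0 < h 1" using h_pos by simp
  show ?thesis
  proof (cases "t \<le> 1")
    case True
    have "h t \<le> h 1 / (1 / (2 - t))"
      by (rule chord[of _ 2]) (use True t in \<open>simp_all add: divide_simps\<close>)
    with t \<open>0 < h 1\<close> show ?thesis by (simp add: field_simps) (smt (verit) mult_pos_pos)
  next
    case False
    define \<theta> where "\<theta> = 1 / (2 * t - 1)"
    have \<theta>: "0 < \<theta>" "\<theta> \<le> 1" "\<theta> * (2 * t - 1) = 1" using False by (auto simp: \<theta>_def)
    have "h t \<le> h 1 / \<theta>"
      by (rule chord[of \<theta> "1/2"]) (use \<theta> in \<open>auto simp: algebra_simps field_simps\<close>)
    also have "\<dots> = h 1 * (2 * t - 1)" by (simp add: \<theta>_def)
    finally show ?thesis using \<open>0 < h 1\<close> by (simp add: algebra_simps)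
  qed
qed

lemma jensen_weighted:
  fixes w X :: "'b \<Rightarrow> real" and h :: "real \<Rightarrow> real"
  assumes w_meas[measurable]: "w \<in> borel_measurable M" and w_pos: "\<And>x. 0 < w x"
    and w_mass: "(\<integral>\<^sup>+x. ennreal (w x) \<partial>M) = ennreal W" and W_pos: "0 < W"
    and X_meas[measurable]: "X \<in> borel_measurable M" and X_pos: "\<And>x. 0 < X x"
    and wX_int: "integrable M (\<lambda>x. w x * X x)"
    and h_pos: "\<And>t. 0 < t \<Longrightarrow> 0 < h t" and h_cont: "continuous_on {0<..} h"
  shows jensen_weighted_convex: "convex_on {0<..} h \<Longrightarrow>
      ennreal (W * h ((\<integral>x. w x * X x \<partial>M) / W)) \<le> (\<integral>\<^sup>+x. ennreal (h (X x) * w x) \<partial>M)"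
    and jensen_weighted_concave: "concave_on {0<..} h \<Longrightarrow>
      (\<integral>\<^sup>+x. ennreal (h (X x) * w x) \<partial>M) \<le> ennreal (W * h ((\<integral>x. w x * X x \<partial>M) / W))"
proof -
  define P where "P = density M (\<lambda>x. ennreal (w x / W))"
  have density_split: "ennreal (w x / W) = ennreal (w x) * ennreal (1 / W)" for x
    using w_pos[of x] W_pos by (simp add: ennreal_mult[symmetric])
  have "emeasure P (space P) = (\<integral>\<^sup>+x. ennreal (w x) * ennreal (1 / W) \<partial>M)"
    by (simp add: P_def emeasure_density density_split)
  also have "\<dots> = 1" using W_pos by (simp add: nn_integral_multc w_mass ennreal_mult[symmetric])
  finally interpret P: prob_space P by (rule prob_spaceI)
  have hX_meas[measurable]: "(\<lambda>x. h (X x)) \<in> borel_measurable M"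
    by (rule borel_measurable_continuous_on_comp[OF _ h_cont X_meas]) (simp_all add: X_pos)
  have hX_meas_P: "(\<lambda>x. h (X x)) \<in> borel_measurable P" by (simp add: P_def)
  have weighted:
    "(\<integral>\<^sup>+x. ennreal (h (X x) * w x) \<partial>M) = ennreal W * (\<integral>\<^sup>+x. ennreal (h (X x)) \<partial>P)"
  proof -
    have "ennreal W * (\<integral>\<^sup>+x. ennreal (h (X x)) \<partial>P)
        = (\<integral>\<^sup>+x. ennreal W * (ennreal (w x / W) * ennreal (h (X x))) \<partial>M)"
      by (simp add: P_def nn_integral_density nn_integral_cmult)
    also have "\<dots> = (\<integral>\<^sup>+x. ennreal (h (X x) * w x) \<partial>M)"
      using W_pos w_pos X_pos h_pos
      by (intro nn_integral_cong) (simp add: ennreal_mult[symmetric] less_imp_le)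
    finally show ?thesis by simp
  qed
  have density_int: "integrable P f \<longleftrightarrow> integrable M (\<lambda>x. w x * f x / W)"
    and density_expectation: "P.expectation f = (\<integral>x. w x * f x \<partial>M) / W"
    if [measurable]: "f \<in> borel_measurable M" for f
    using w_pos W_pos unfolding P_def
    by (simp_all add: integrable_density integral_density less_imp_le)
  have X_int: "integrable P X" using wX_int by (simp add: density_int)
  have mean: "P.expectation X = (\<integral>x. w x * X x \<partial>M) / W" by (simp add: density_expectation)
  have X_range: "AE x in P. X x \<in> {0<..}" using X_pos by simp
  have expectation_hX: "ennreal W * (\<integral>\<^sup>+x. ennreal (h (X x)) \<partial>P)
      = ennreal (W * P.expectation (\<lambda>x. h (X x)))" if "integrable P (\<lambda>x. h (X x))"
    using that h_pos X_pos W_pos by (simp add: nn_integral_eq_integral less_imp_le ennreal_mult)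
  show "ennreal (W * h ((\<integral>x. w x * X x \<partial>M) / W)) \<le> (\<integral>\<^sup>+x. ennreal (h (X x) * w x) \<partial>M)"
    if convex: "convex_on {0<..} h"
  proof (cases "integrable P (\<lambda>x. h (X x))")
    case True
    have "h (P.expectation X) \<le> P.expectation (\<lambda>x. h (X x))"
      by (rule P.jensens_inequality[OF X_int X_range _ True convex, of 0]) simp
    then have "W * h ((\<integral>x. w x * X x \<partial>M) / W) \<le> W * P.expectation (\<lambda>x. h (X x))"
      using W_pos by (simp add: mean)
    then show ?thesis by (simp add: weighted expectation_hX[OF True] ennreal_leI)
  next
    case False
    have "AE x in P. 0 \<le> h (X x)" using h_pos X_pos by (simp add: less_imp_le)
    then have "\<not> (\<integral>\<^sup>+x. ennreal (h (X x)) \<partial>P) < \<infinity>"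
      using False integrableI_nonneg[OF hX_meas_P] by blast
    then have "(\<integral>\<^sup>+x. ennreal (h (X x)) \<partial>P) = \<infinity>" by (simp add: less_top[symmetric])
    then show ?thesis using W_pos by (simp add: weighted ennreal_mult_top)
  qed
  show "(\<integral>\<^sup>+x. ennreal (h (X x) * w x) \<partial>M) \<le> ennreal (W * h ((\<integral>x. w x * X x \<partial>M) / W))"
    if concave: "concave_on {0<..} h"
  proof -
    \<comment> \<open>concavity and positivity bound h linearly, which makes h \<circ> X integrable\<close>
    have "integrable P (\<lambda>x. 2 * h 1 * (1 + X x))" using X_int by simp
    then have hX_int: "integrable P (\<lambda>x. h (X x))"
      by (rule Bochner_Integration.integrable_bound)
         (use concave_on_pos_linear_growth[OF concave h_pos] h_pos X_pos in
           \<open>auto intro!: AE_I2 hX_meas_P simp: less_imp_le\<close>)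
    have "- h (P.expectation X) \<le> P.expectation (\<lambda>x. - h (X x))"
      using concave unfolding concave_on_def
      by (intro P.jensens_inequality[OF X_int X_range, of 0]) (use hX_int in auto)
    then have "W * P.expectation (\<lambda>x. h (X x)) \<le> W * h ((\<integral>x. w x * X x \<partial>M) / W)"
      using W_pos by (simp add: mean)
    then show ?thesis by (simp add: weighted expectation_hX[OF hX_int] ennreal_leI)
  qed
qed

section \<open>The quadratic potential\<close>

abbreviation quad_potential :: "real \<Rightarrow> 'a::euclidean_space \<Rightarrow> ereal" where
  "quad_potential k \<equiv> \<lambda>x. ereal (k * (norm x)\<^sup>2 / 2)"

lemma has_alex_hessian_quad_potential:
  "has_alex_hessian (quad_potential k) x (k *\<^sub>R x) (\<lambda>v. k *\<^sub>R v)"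
proof -
  have exact: "k * (norm y)\<^sup>2 / 2 - k * (norm x)\<^sup>2 / 2 - k * inner x (y - x)
      - k * inner (y - x) (y - x) / 2 = 0" for y :: 'a
    by (simp add: power2_norm_eq_inner inner_diff_left inner_diff_right inner_commute field_simps)
  show ?thesis by (simp add: has_alex_hessian_def exact linear_scale_self)
qed

lemma has_alex_hessian_grad_unique:
  fixes x g g' :: "'a::euclidean_space"
  assumes H: "has_alex_hessian \<psi> x g A" and H': "has_alex_hessian \<psi> x g' A'"
  shows "g = g'"
proof (rule ccontr)
  assume "g \<noteq> g'"
  define d where "d = g' - g"
  define N where "N = inner d d"
  define K where "K = (inner (A' d) d - inner (A d) d) / 2"
  have "N > 0" using \<open>g \<noteq> g'\<close> by (simp add: N_def d_def)
  have "linear A" "linear A'" using H H' by (auto simp: has_alex_hessian_def)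
  define rem where "rem = (\<lambda>g A y. (real_of_ereal (\<psi> y) - real_of_ereal (\<psi> x) - inner g (y - x)
      - inner (A (y - x)) (y - x) / 2) / (norm (y - x))\<^sup>2)"
  have "(rem g A \<longlongrightarrow> 0) (at x)" "(rem g' A' \<longlongrightarrow> 0) (at x)"
    using H H' by (auto simp: has_alex_hessian_def rem_def)
  moreover have ray: "filterlim (\<lambda>t. x + t *\<^sub>R d) (at x) (at_right 0)"
  proof -
    have "((\<lambda>t. x + t *\<^sub>R d) \<longlongrightarrow> x + 0 *\<^sub>R d) (at_right 0)" by (intro tendsto_intros)
    moreover have "\<forall>\<^sub>F t in at_right 0. x + t *\<^sub>R d \<noteq> x"
      using \<open>N > 0\<close>
      by (auto simp: N_def eventually_at_right_less intro: eventually_mono[OF eventually_at_right_less])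
    ultimately show ?thesis by (simp add: filterlim_at)
  qed
  ultimately have
    "((\<lambda>t. t * (rem g A (x + t *\<^sub>R d) - rem g' A' (x + t *\<^sub>R d))) \<longlongrightarrow> 0 * (0 - 0)) (at_right 0)"
    by (intro tendsto_intros filterlim_compose[OF _ ray])
  \<comment> \<open>along the ray x + t d the two expansions differ by t N + t^2 K, which is not o(t^2)\<close>
  moreover have "t * (rem g A (x + t *\<^sub>R d) - rem g' A' (x + t *\<^sub>R d)) = 1 + t * (K / N)"
    if "t > 0" for t
  proof -
    have "(norm (t *\<^sub>R d))\<^sup>2 = t\<^sup>2 * N" by (simp add: N_def power2_norm_eq_inner power_mult_distrib)
    moreover have "inner g' d - inner g d = N" by (simp add: N_def d_def inner_diff_left)
    ultimately show ?thesis
      using that \<open>N > 0\<close> linear_scale[OF \<open>linear A\<close>] linear_scale[OF \<open>linear A'\<close>]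
      by (simp add: rem_def K_def field_simps power2_eq_square)
  qed
  then have "\<forall>\<^sub>F t in at_right 0.
      1 + t * (K / N) = t * (rem g A (x + t *\<^sub>R d) - rem g' A' (x + t *\<^sub>R d))"
    by (auto intro: eventually_mono[OF eventually_at_right_less])
  then have
    "((\<lambda>t. t * (rem g A (x + t *\<^sub>R d) - rem g' A' (x + t *\<^sub>R d))) \<longlongrightarrow> 1 + 0 * (K / N)) (at_right 0)"
    by (rule Lim_transform_eventually[rotated]) (intro tendsto_intros)
  ultimately have "(0::real) * (0 - 0) = 1 + 0 * (K / N)"
    by (rule tendsto_unique[rotated]) simp
  then show False by simp
qed

lemma Xset_quad_potential:
  assumes "k \<noteq> 0"
  shows "Xset (quad_potential k :: 'a::euclidean_space \<Rightarrow> ereal) = UNIV"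
proof -
  have "bij (\<lambda>v::'a. k *\<^sub>R v)"
    using assms unfolding bij_def inj_def surj_def
    by (auto intro!: exI[of _ "(1 / k) *\<^sub>R y" for y])
  then show ?thesis unfolding Xset_def using has_alex_hessian_quad_potential[of k] by auto
qed

lemma alex_grad_quad_potential: "alex_grad (quad_potential k) x = k *\<^sub>R x"
  unfolding alex_grad_def
  using has_alex_hessian_quad_potential has_alex_hessian_grad_unique by (blast intro: some_equality)

lemma legendre_quad_potential:
  assumes k: "0 < k"
  shows "legendre (quad_potential k :: 'a::euclidean_space \<Rightarrow> ereal) = quad_potential (1 / k)"
proof
  fix y :: 'a
  have young: "inner x y - k * (norm x)\<^sup>2 / 2 \<le> (1 / k) * (norm y)\<^sup>2 / 2" for x
  proof -
    have "0 \<le> (norm (k *\<^sub>R x - y))\<^sup>2 / (2 * k)" using k by simp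
    also have "\<dots> = k * (norm x)\<^sup>2 / 2 - inner x y + (1 / k) * (norm y)\<^sup>2 / 2"
      using k unfolding power2_norm_eq_inner
      by (simp add: inner_diff_left inner_diff_right inner_commute power2_eq_square field_simps)
    finally show ?thesis by simp
  qed
  have attained:
    "inner ((1 / k) *\<^sub>R y) y - k * (norm ((1 / k) *\<^sub>R y))\<^sup>2 / 2 = (1 / k) * (norm y)\<^sup>2 / 2"
    using k by (simp add: power2_norm_eq_inner[symmetric] power_divide power2_eq_square field_simps)
  show "legendre (quad_potential k) y = quad_potential (1 / k) y"
    unfolding legendre_def
  proof (rule antisym)
    show "(SUP x. ereal (inner x y) - ereal (k * (norm x)\<^sup>2 / 2)) \<le> ereal ((1 / k) * (norm y)\<^sup>2 / 2)"
      using young by (intro SUP_least) simp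
    show "ereal ((1 / k) * (norm y)\<^sup>2 / 2) \<le> (SUP x. ereal (inner x y) - ereal (k * (norm x)\<^sup>2 / 2))"
      by (rule SUP_upper2[of "(1 / k) *\<^sub>R y"]) (use attained in simp_all)
  qed
qed

lemma V_orlicz_quad_potential:
  fixes g :: "'a::euclidean_space \<Rightarrow> real"
  assumes "k \<noteq> 0"
  shows "V_orlicz h F1 F2 (quad_potential k) g
     = (\<integral>\<^sup>+x. ennreal (h (g (k *\<^sub>R x) / F2 (k * (norm x)\<^sup>2 / 2)) * F1 (k * (norm x)\<^sup>2 / 2))
         \<partial>lebesgue)"
proof -
  have energy: "k * inner x x - k * (norm x)\<^sup>2 / 2 = k * (norm x)\<^sup>2 / 2" for x :: 'a
    by (simp add: power2_norm_eq_inner)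
  show ?thesis
    unfolding V_orlicz_def Xset_quad_potential[OF assms] alex_grad_quad_potential by (simp add: energy)
qed

lemma Fplus_quad_potential:
  assumes "k \<noteq> 0"
  shows "Fplus (quad_potential k :: 'a::euclidean_space \<Rightarrow> ereal)
     = {g. (\<forall>x. 0 < g x) \<and> integrable lebesgue g \<and> 0 < (\<integral>x. g x \<partial>lebesgue)}"
  using Xset_quad_potential[OF assms, where 'a='a]
  by (simp add: Fplus_def I_g_def set_integrable_def set_lebesgue_integral_def)

lemma I_g_quad_potential:
  "k \<noteq> 0 \<Longrightarrow> I_g g (quad_potential k :: 'a::euclidean_space \<Rightarrow> ereal) = (\<integral>x. g x \<partial>lebesgue)"
  using Xset_quad_potential[of k, where 'a='a] by (simp add: I_g_def set_lebesgue_integral_def)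

lemma V_orlicz_quad_potential_normalize_g:
  fixes g :: "'a::euclidean_space \<Rightarrow> real"
  assumes "k \<noteq> 0"
  shows "V_orlicz h F1 F2 (quad_potential k) (normalize_g (quad_potential (1 / k)) g)
     = (\<integral>\<^sup>+x. ennreal (h (sqrt (2 * pi) ^ DIM('a) * g (k *\<^sub>R x) / (\<integral>y. g y \<partial>lebesgue)
                         / F2 (k * (norm x)\<^sup>2 / 2)) * F1 (k * (norm x)\<^sup>2 / 2)) \<partial>lebesgue)"
proof -
  have "1 / k \<noteq> 0" using assms by simp
  have "normalize_g (quad_potential (1 / k)) g
      = (\<lambda>y. sqrt (2 * pi) ^ DIM('a) * g y / (\<integral>y. g y \<partial>lebesgue))"
    unfolding normalize_g_def I_g_quad_potential[OF \<open>1 / k \<noteq> 0\<close>] ..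
  with assms show ?thesis by (simp add: V_orlicz_quad_potential)
qed

section \<open>Orlicz functions and log-concavity\<close>

lemma strictly_convex_on_imp_convex_on:
  fixes f :: "real \<Rightarrow> real"
  assumes "convex S" "strictly_convex_on S f"
  shows "convex_on S f"
proof (rule convex_onI[OF _ assms(1)])
  fix t x y :: real assume "0 < t" "t < 1" "x \<in> S" "y \<in> S"
  with assms(2) have "x \<noteq> y \<Longrightarrow> f ((1 - t) * x + t * y) < (1 - t) * f x + t * f y"
    unfolding strictly_convex_on_def by blast
  then show "f ((1 - t) *\<^sub>R x + t *\<^sub>R y) \<le> (1 - t) * f x + t * f y"
    by (cases "x = y") (simp_all add: algebra_simps)
qed

lemma const_on_pos_imp_convex_on:
  assumes "const_on_pos h"
  shows "convex_on {0<..} h"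
proof (rule convex_onI)
  fix t x y :: real assume "0 < t" "t < 1" "x \<in> {0<..}" "y \<in> {0<..}"
  moreover from this have "0 < (1 - t) *\<^sub>R x + t *\<^sub>R y" by (simp add: add_pos_pos)
  ultimately show "h ((1 - t) *\<^sub>R x + t *\<^sub>R y) \<le> (1 - t) * h x + t * h y"
    using assms by (auto simp: const_on_pos_def algebra_simps)
qed simp

lemma PhiSet_convex_on: "h \<in> PhiSet \<Longrightarrow> convex_on {0<..} h"
  by (auto simp: PhiSet_def intro: const_on_pos_imp_convex_on strictly_convex_on_imp_convex_on)

lemma PsiSet_concave_on: "h \<in> PsiSet \<Longrightarrow> concave_on {0<..} h"
proof -
  assume "h \<in> PsiSet"
  then have "const_on_pos (\<lambda>t. - h t) \<or> strictly_convex_on {0<..} (\<lambda>t. - h t)"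
    by (auto simp: PsiSet_def const_on_pos_def strictly_concave_on_def)
  then show ?thesis
    unfolding concave_on_def by (auto intro: const_on_pos_imp_convex_on strictly_convex_on_imp_convex_on)
qed

lemma log_concave_on_scaleR:
  assumes "log_concave_on (UNIV :: 'a::real_vector set) f"
  shows "log_concave_on UNIV (\<lambda>y. f (r *\<^sub>R y))"
  unfolding log_concave_on_def
proof (intro ballI allI impI)
  fix x y :: 'a and t :: real
  assume "0 \<le> t \<and> t \<le> 1 \<and> t *\<^sub>R x + (1 - t) *\<^sub>R y \<in> UNIV"
  then have "f (r *\<^sub>R x) powr t * f (r *\<^sub>R y) powr (1 - t) \<le> f (t *\<^sub>R (r *\<^sub>R x) + (1 - t) *\<^sub>R (r *\<^sub>R y))"
    using assms unfolding log_concave_on_def by blast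
  then show "f (r *\<^sub>R x) powr t * f (r *\<^sub>R y) powr (1 - t) \<le> f (r *\<^sub>R (t *\<^sub>R x + (1 - t) *\<^sub>R y))"
    by (simp add: scaleR_add_right mult.commute)
qed

section \<open>The Orlicz affine surface area of the quadratic potential\<close>

lemma I_F_scale:
  assumes F[measurable]: "F \<in> borel_measurable borel" and c: "c \<noteq> 0"
  shows "I_F F 1 TYPE('a::euclidean_space) = ennreal (\<bar>c\<bar> ^ DIM('a)) * I_F F c TYPE('a)"
proof -
  have "(\<lambda>x::'a. ennreal (F ((norm x)\<^sup>2 / 2))) \<in> borel_measurable lebesgue"
    by (simp add: measurable_completion)
  from nn_integral_lebesgue_scaleR[OF this c] show ?thesis
    by (simp add: I_F_def power_mult_distrib)
qed

lemma I_F_real_pos: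
  assumes "F \<in> borel_measurable borel" "c \<noteq> 0"
    and "0 < I_F F 1 TYPE('a::euclidean_space)" "I_F F 1 TYPE('a) < \<infinity>"
  obtains I where "I_F F c TYPE('a) = ennreal I" "0 < I"
proof -
  have "I_F F c TYPE('a) \<noteq> \<infinity>" "I_F F c TYPE('a) \<noteq> 0"
    using assms I_F_scale[OF assms(1,2), where 'a='a] by (auto simp: ennreal_mult_eq_top_iff)
  then show ?thesis
    using that[of "enn2real (I_F F c TYPE('a))"]
    by (simp add: less_top enn2real_positive_iff zero_less_iff_neq_zero)
qed

context
  fixes F :: "real \<Rightarrow> real" and a b c Ir :: real
  assumes a_pos: "0 < a" and b_pos: "0 < b" and c_pos: "0 < c"
    and F_meas[measurable]: "F \<in> borel_measurable borel" and F_pos: "\<And>t. 0 < F t"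
    and I_F_eq: "I_F F c TYPE('a::euclidean_space) = ennreal Ir" and Ir_pos: "0 < Ir"
begin

lemma profile_measurable[measurable]:
  "(\<lambda>x::'a. F (c\<^sup>2 * (norm x)\<^sup>2 / 2)) \<in> borel_measurable lebesgue"
  by (simp add: measurable_completion)

lemma profile_nn_integral:
  "(\<integral>\<^sup>+x. ennreal (F (c\<^sup>2 * (norm (x::'a))\<^sup>2 / 2)) \<partial>lebesgue) = ennreal Ir"
  using I_F_eq by (simp add: I_F_def)

lemma V_orlicz_quad_potential_bounds:
  fixes h :: "real \<Rightarrow> real" and g :: "'a \<Rightarrow> real"
  assumes h_pos: "\<And>t. 0 < t \<Longrightarrow> 0 < h t" and h_cont: "continuous_on {0<..} h"
    and g_int: "integrable lebesgue g" and g_pos: "\<And>x. 0 < g x"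
    and g_mass: "0 < (\<integral>x. g x \<partial>lebesgue)"
  defines "V \<equiv> V_orlicz h (\<lambda>t. a * F t) (\<lambda>t. b * F t) (quad_potential (c\<^sup>2))
                  (normalize_g (quad_potential (1 / c\<^sup>2)) g)"
    and "m \<equiv> sqrt (2 * pi) ^ DIM('a) / (c ^ (2 * DIM('a)) * b * Ir)"
  shows V_orlicz_quad_potential_lower: "convex_on {0<..} h \<Longrightarrow> ennreal (a * Ir * h m) \<le> V"
    and V_orlicz_quad_potential_upper: "concave_on {0<..} h \<Longrightarrow> V \<le> ennreal (a * Ir * h m)"
proof -
  define \<phi> where "\<phi> = (\<lambda>x::'a. F (c\<^sup>2 * (norm x)\<^sup>2 / 2))"
  define J where "J = (\<integral>x. g x \<partial>lebesgue)"
  define s where "s = sqrt (2 * pi) ^ DIM('a)"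
  define w where "w = (\<lambda>x. a * \<phi> x)"
  define X where "X = (\<lambda>x. s * g (c\<^sup>2 *\<^sub>R x) / J / (b * \<phi> x))"
  have [measurable]: "g \<in> borel_measurable lebesgue" using g_int by simp
  have \<phi>_pos: "0 < \<phi> x" for x by (simp add: \<phi>_def F_pos)
  have "0 < s" "0 < J" using g_mass by (simp_all add: s_def J_def)
  have "c\<^sup>2 \<noteq> 0" using c_pos by simp
  have V_eq: "V = (\<integral>\<^sup>+x. ennreal (h (X x) * w x) \<partial>lebesgue)"
    unfolding V_def V_orlicz_quad_potential_normalize_g[OF \<open>c\<^sup>2 \<noteq> 0\<close>]
    by (simp add: X_def w_def \<phi>_def s_def J_def)
  have w_mass: "(\<integral>\<^sup>+x. ennreal (w x) \<partial>lebesgue) = ennreal (a * Ir)"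
    using a_pos Ir_pos \<phi>_pos profile_nn_integral
    by (simp add: w_def \<phi>_def ennreal_mult less_imp_le nn_integral_cmult)
  have wX: "(\<lambda>x. w x * X x) = (\<lambda>x. a * s / (b * J) * g (c\<^sup>2 *\<^sub>R x))"
    using \<phi>_pos by (auto simp: fun_eq_iff w_def X_def mult_ac dest: less_imp_neq[symmetric])
  have scaled: "has_bochner_integral lebesgue (\<lambda>x. g (c\<^sup>2 *\<^sub>R x)) (J / (c\<^sup>2) ^ DIM('a))"
    using has_bochner_integral_lebesgue_scaleR[OF g_int _ \<open>c\<^sup>2 \<noteq> 0\<close>] g_pos
    by (simp add: J_def less_imp_le)
  have wX_int: "integrable lebesgue (\<lambda>x. w x * X x)"
    unfolding wX using integrable.intros[OF scaled] by simp
  have "(\<integral>x. w x * X x \<partial>lebesgue) = a * s / (b * J) * (J / (c\<^sup>2) ^ DIM('a))"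
    unfolding wX by (simp add: has_bochner_integral_integral_eq[OF scaled])
  then have mean: "(\<integral>x. w x * X x \<partial>lebesgue) / (a * Ir) = m"
    using a_pos b_pos c_pos Ir_pos \<open>0 < J\<close>
    unfolding m_def power_mult by (simp add: s_def field_simps)
  have w_pos: "\<And>x. 0 < w x" and X_pos: "\<And>x. 0 < X x"
    using a_pos b_pos g_pos \<phi>_pos \<open>0 < s\<close> \<open>0 < J\<close> by (simp_all add: w_def X_def)
  have "w \<in> borel_measurable lebesgue" "X \<in> borel_measurable lebesgue"
    by (simp_all add: w_def X_def \<phi>_def)
  note jensen = jensen_weighted[OF this(1) w_pos w_mass _ this(2) X_pos wX_int h_pos h_cont]
  show "convex_on {0<..} h \<Longrightarrow> ennreal (a * Ir * h m) \<le> V"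
    using jensen(1) a_pos Ir_pos by (simp add: V_eq mean)
  show "concave_on {0<..} h \<Longrightarrow> V \<le> ennreal (a * Ir * h m)"
    using jensen(2) a_pos Ir_pos by (simp add: V_eq mean)
qed

lemma quad_potential_extremal:
  fixes h :: "real \<Rightarrow> real"
  defines "g\<^sub>0 \<equiv> \<lambda>y::'a. F ((norm y)\<^sup>2 / (2 * c\<^sup>2))"
    and "m \<equiv> sqrt (2 * pi) ^ DIM('a) / (c ^ (2 * DIM('a)) * b * Ir)"
  shows quad_potential_extremal_Fplus: "g\<^sub>0 \<in> Fplus (quad_potential (1 / c\<^sup>2))"
    and V_orlicz_quad_potential_extremal:
      "V_orlicz h (\<lambda>t. a * F t) (\<lambda>t. b * F t) (quad_potential (c\<^sup>2))
         (normalize_g (quad_potential (1 / c\<^sup>2)) g\<^sub>0) = ennreal (a * Ir * h m)"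
proof -
  define \<phi> where "\<phi> = (\<lambda>x::'a. F (c\<^sup>2 * (norm x)\<^sup>2 / 2))"
  define J where "J = (c\<^sup>2) ^ DIM('a) * Ir"
  have "c\<^sup>2 \<noteq> 0" "0 < J" using c_pos Ir_pos by (simp_all add: J_def)
  have \<phi>_pos: "0 < \<phi> x" for x by (simp add: \<phi>_def F_pos)
  have g\<^sub>0_pos: "0 < g\<^sub>0 y" for y by (simp add: g\<^sub>0_def F_pos)
  \<comment> \<open>the witness is chosen so that the argument of h in the integrand is constant\<close>
  have g\<^sub>0_scaled: "g\<^sub>0 (c\<^sup>2 *\<^sub>R x) = \<phi> x" for x
    using c_pos by (simp add: g\<^sub>0_def \<phi>_def power_mult_distrib power2_eq_square mult_ac)
  have [measurable]: "g\<^sub>0 \<in> borel_measurable lebesgue"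
    by (simp add: g\<^sub>0_def measurable_completion)
  have "(\<integral>\<^sup>+y. ennreal (g\<^sub>0 y) \<partial>lebesgue) = ennreal ((c\<^sup>2) ^ DIM('a)) * ennreal Ir"
    using nn_integral_lebesgue_scaleR[of "\<lambda>y. ennreal (g\<^sub>0 y)", OF _ \<open>c\<^sup>2 \<noteq> 0\<close>]
    by (simp add: g\<^sub>0_scaled \<phi>_def profile_nn_integral)
  then have "has_bochner_integral lebesgue g\<^sub>0 J"
    using \<open>0 < J\<close> g\<^sub>0_pos
    by (intro has_bochner_integral_nn_integral) (simp_all add: J_def ennreal_mult Ir_pos less_imp_le)
  then have g\<^sub>0_int: "integrable lebesgue g\<^sub>0" and g\<^sub>0_mass: "(\<integral>y. g\<^sub>0 y \<partial>lebesgue) = J"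
    by (auto intro: integrable.intros has_bochner_integral_integral_eq)
  show "g\<^sub>0 \<in> Fplus (quad_potential (1 / c\<^sup>2))"
    using c_pos g\<^sub>0_pos g\<^sub>0_int g\<^sub>0_mass \<open>0 < J\<close> by (subst Fplus_quad_potential) simp_all
  have ratio: "sqrt (2 * pi) ^ DIM('a) * g\<^sub>0 (c\<^sup>2 *\<^sub>R x) / J / (b * \<phi> x) = m" for x
    using \<phi>_pos[of x] b_pos \<open>0 < J\<close>
    unfolding m_def power_mult by (simp add: g\<^sub>0_scaled J_def field_simps)
  have "V_orlicz h (\<lambda>t. a * F t) (\<lambda>t. b * F t) (quad_potential (c\<^sup>2))
         (normalize_g (quad_potential (1 / c\<^sup>2)) g\<^sub>0)
      = (\<integral>\<^sup>+x. ennreal (h m * a) * ennreal (\<phi> x) \<partial>lebesgue)"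
    unfolding V_orlicz_quad_potential_normalize_g[OF \<open>c\<^sup>2 \<noteq> 0\<close>] g\<^sub>0_mass
    using ratio \<phi>_pos
    by (intro nn_integral_cong) (simp add: \<phi>_def ennreal_mult''[symmetric] less_imp_le mult_ac)
  also have "\<dots> = ennreal (a * Ir * h m)"
    using profile_nn_integral Ir_pos
    by (simp add: \<phi>_def nn_integral_cmult ennreal_mult'[symmetric] mult_ac)
  finally show "V_orlicz h (\<lambda>t. a * F t) (\<lambda>t. b * F t) (quad_potential (c\<^sup>2))
         (normalize_g (quad_potential (1 / c\<^sup>2)) g\<^sub>0) = ennreal (a * Ir * h m)" .
qed

lemma quad_potential_extremal_Lset:
  assumes "log_concave_on UNIV (\<lambda>x::'a. F ((norm x)\<^sup>2 / 2))"
  shows "(\<lambda>y::'a. F ((norm y)\<^sup>2 / (2 * c\<^sup>2))) \<in> Lset (quad_potential (1 / c\<^sup>2))"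
proof -
  have "(\<lambda>y::'a. F ((norm y)\<^sup>2 / (2 * c\<^sup>2))) = (\<lambda>y. F ((norm ((1 / c) *\<^sub>R y))\<^sup>2 / 2))"
    by (simp add: power_divide mult.commute)
  moreover have "1 / c\<^sup>2 \<noteq> 0" using c_pos by simp
  ultimately show ?thesis
    using log_concave_on_scaleR[OF assms, of "1 / c"] quad_potential_extremal_Fplus
    unfolding Lset_def Xset_quad_potential[OF \<open>1 / c\<^sup>2 \<noteq> 0\<close>] by simp
qed

end

theorem corollary2p1:
  fixes F :: "real \<Rightarrow> real" and a b c :: real and h :: "real \<Rightarrow> real"
  assumes "0 < a" "0 < b" "0 < c"
    and "F \<in> borel_measurable borel" "\<forall>t. 0 < F t"
    and "0 < I_F F 1 TYPE('a::euclidean_space)" "I_F F 1 TYPE('a) < \<infinity>"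
    and "h \<in> PhiSet \<union> PsiSet"
  defines "\<psi>c \<equiv> (\<lambda>x::'a. ereal (c\<^sup>2 * (norm x)\<^sup>2 / 2))"
    and "val \<equiv> a * enn2real (I_F F c TYPE('a)) *
           h (sqrt (2 * pi) ^ DIM('a) / (c ^ (2 * DIM('a)) * b * enn2real (I_F F c TYPE('a))))"
  shows "(h \<in> PhiSet \<longrightarrow> as_orlicz_inf h (\<lambda>t. a * F t) (\<lambda>t. b * F t) \<psi>c = ennreal val)
       \<and> (h \<in> PsiSet \<longrightarrow> as_orlicz_sup h (\<lambda>t. a * F t) (\<lambda>t. b * F t) \<psi>c = ennreal val)
       \<and> (log_concave_on (UNIV::'a set) (\<lambda>x. F ((norm x)\<^sup>2 / 2)) \<longrightarrow>
            (h \<in> PhiSet \<longrightarrow> G_orlicz_inf h (\<lambda>t. a * F t) (\<lambda>t. b * F t) \<psi>c = ennreal val)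
          \<and> (h \<in> PsiSet \<longrightarrow> G_orlicz_sup h (\<lambda>t. a * F t) (\<lambda>t. b * F t) \<psi>c = ennreal val))"
proof -
  have "c \<noteq> 0" using assms(3) by simp
  obtain I where I: "I_F F c TYPE('a) = ennreal I" "0 < I"
    using I_F_real_pos[OF assms(4) \<open>c \<noteq> 0\<close> assms(6,7)] by blast
  note setting = assms(1-4) assms(5)[rule_format] I
  have h_pos: "\<And>t. 0 < t \<Longrightarrow> 0 < h t" and h_cont: "continuous_on {0<..} h"
    using assms(8) by (auto simp: PhiSet_def PsiSet_def admissible_h_def)
  define V where
    "V g = V_orlicz h (\<lambda>t. a * F t) (\<lambda>t. b * F t) \<psi>c (normalize_g (legendre \<psi>c) g)" for g
  define g\<^sub>0 where "g\<^sub>0 = (\<lambda>y::'a. F ((norm y)\<^sup>2 / (2 * c\<^sup>2)))"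
  have legendre: "legendre \<psi>c = quad_potential (1 / c\<^sup>2)"
    unfolding \<psi>c_def using assms(3) by (simp add: legendre_quad_potential)
  have Fplus: "Fplus (quad_potential (1 / c\<^sup>2) :: 'a \<Rightarrow> ereal)
      = {g. (\<forall>x. 0 < g x) \<and> integrable lebesgue g \<and> 0 < (\<integral>x. g x \<partial>lebesgue)}"
    using assms(3) by (intro Fplus_quad_potential) simp
  have val: "val = a * I * h (sqrt (2 * pi) ^ DIM('a) / (c ^ (2 * DIM('a)) * b * I))"
    using I by (simp add: val_def)
  have extremal: "g\<^sub>0 \<in> Fplus (legendre \<psi>c)" "V g\<^sub>0 = ennreal val"
    "log_concave_on UNIV (\<lambda>x::'a. F ((norm x)\<^sup>2 / 2)) \<Longrightarrow> g\<^sub>0 \<in> Lset (legendre \<psi>c)"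
    using quad_potential_extremal[OF setting] quad_potential_extremal_Lset[OF setting]
    unfolding V_def legendre unfolding g\<^sub>0_def val \<psi>c_def by simp_all
  have bounds: "h \<in> PhiSet \<Longrightarrow> ennreal val \<le> V g" "h \<in> PsiSet \<Longrightarrow> V g \<le> ennreal val"
    if "g \<in> Fplus (legendre \<psi>c)" for g
    using V_orlicz_quad_potential_bounds[OF setting h_pos h_cont] that
      PhiSet_convex_on PsiSet_concave_on
    unfolding V_def legendre unfolding Fplus val \<psi>c_def by simp_all
  have "Lset (legendre \<psi>c) \<subseteq> Fplus (legendre \<psi>c)" by (auto simp: Lset_def)
  then show ?thesis
    unfolding as_orlicz_inf_def as_orlicz_sup_def G_orlicz_inf_def G_orlicz_sup_def V_def[symmetric]
    using extremal bounds
    by (intro conjI impI cInf_eq_minimum cSup_eq_maximum)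
       (auto intro: image_eqI[where f = V and x = g\<^sub>0, OF extremal(2)[symmetric]])
qed

end
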